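(* Let $R$ be a commutative ring with $2=0$, let $\mathcal{G}$ be the complete quadrilateral with points $a,b,c,x,y,z$ and lines $\ell_1=\{a,b,c\}$, $\ell_2=\{b,x,z\}$, $\ell_3=\{a,y,z\}$, $\ell_4=\{c,x,y\}$, and let $A=M_R(\mathcal{G},1)$. Put $\ell=\ell_1$ and $s=a+b+c+x+y+z$, and consider the $R$-basis $\mathcal{B}=(a,\ b,\ \ell,\ \ell x,\ \ell y,\ s)$ of $A$, where $\ell x=b+c+y+z$ and $\ell y=a+c+x+z$. For $\lambda\in R^\times$ and $i\in\{1,2,3,4\}$ let $\tau_{\ell_i,\lambda}=\mathrm{id}+(1+\lambda)\operatorname{ad}_{\ell_i}$. Then, with respect to $\mathcal{B}$ (the $j$-th column giving the coordinates of the image of the $j$-th basis vector), \[ \tau_{\ell_1,\lambda}=S_{0,0,\lambda},\quad \tau_{\ell_2,\lambda}=S_{1+\lambda,0,\lambda},\quad \tau_{\ell_3,\lambda}=S_{0,1+\lambda,\lambda},\quad \tau_{\ell_4,\lambda}=S_{1+\lambda,1+\lambda,\lambda}. \]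
   Context: For distinct collinear points $p,q$ (written $p\sim q$), $p\wedge q$ is the third point of their line. The nilpotent Matsuo algebra $A=M_R(\mathcal{G},1)$ is the free $R$-module with basis the points and commutative bilinear product $p\cdot q=0$ if $p=q$ or $p\not\sim q$, $p\cdot q=p+q+p\wedge q$ if $p\sim q$; a line is identified with the sum of its three points, and $\operatorname{ad}_{\ell}(v)=\ell v$. For $\alpha,\beta\in R$, $M_{\alpha,\beta}=\begin{pmatrix}\alpha&0&\beta\\0&\beta&\alpha\\0&0&0\end{pmatrix}$, and for $\lambda\in R^\times$, $S_{\alpha,\beta,\lambda}$ is the $6\times6$ block matrix $\begin{pmatrix}I_3&O_3\\ M_{\alpha,\beta}&\operatorname{diag}(\lambda,\lambda,1)\end{pmatrix}$ with $I_3$ the identity and $O_3$ the zero $3\times3$ matrix. *)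

theory Defs
  imports Main
begin

datatype pt = Pa | Pb | Pc | Px | Py | Pz

definition pts :: "pt set" where "pts = {Pa, Pb, Pc, Px, Py, Pz}"

definition l1 :: "pt set" where "l1 = {Pa, Pb, Pc}"
definition l2 :: "pt set" where "l2 = {Pb, Px, Pz}"
definition l3 :: "pt set" where "l3 = {Pa, Py, Pz}"
definition l4 :: "pt set" where "l4 = {Pc, Px, Py}"

definition glines :: "pt set set" where "glines = {l1, l2, l3, l4}"

definition coll :: "pt \<Rightarrow> pt \<Rightarrow> bool" where
  "coll p q \<longleftrightarrow> p \<noteq> q \<and> (\<exists>L\<in>glines. p \<in> L \<and> q \<in> L)"

definition wedge :: "pt \<Rightarrow> pt \<Rightarrow> pt" where
  "wedge p q = (THE r. \<exists>L\<in>glines. p \<in> L \<and> q \<in> L \<and> r \<in> L \<and> r \<noteq> p \<and> r \<noteq> q)"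

text \<open>Elements of the free R-module on the points are coefficient functions.\<close>
definition ev :: "pt \<Rightarrow> pt \<Rightarrow> 'a::comm_ring_1" where
  "ev p = (\<lambda>r. if r = p then 1 else 0)"

definition pprod :: "pt \<Rightarrow> pt \<Rightarrow> pt \<Rightarrow> 'a::comm_ring_1" where
  "pprod p q = (if coll p q then (\<lambda>r. ev p r + ev q r + ev (wedge p q) r) else (\<lambda>r. 0))"

definition mprod :: "(pt \<Rightarrow> 'a::comm_ring_1) \<Rightarrow> (pt \<Rightarrow> 'a) \<Rightarrow> pt \<Rightarrow> 'a" where
  "mprod v w = (\<lambda>r. \<Sum>p\<in>pts. \<Sum>q\<in>pts. v p * w q * pprod p q r)"

text \<open>A line identified with the sum of its points.\<close>
definition lvec :: "pt set \<Rightarrow> pt \<Rightarrow> 'a::comm_ring_1" where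
  "lvec L = (\<lambda>r. if r \<in> L then 1 else 0)"

definition ad :: "pt set \<Rightarrow> (pt \<Rightarrow> 'a::comm_ring_1) \<Rightarrow> pt \<Rightarrow> 'a" where
  "ad L v = mprod (lvec L) v"

definition tau :: "pt set \<Rightarrow> 'a::comm_ring_1 \<Rightarrow> (pt \<Rightarrow> 'a) \<Rightarrow> pt \<Rightarrow> 'a" where
  "tau L lam v = (\<lambda>r. v r + (1 + lam) * ad L v r)"

definition basisB :: "nat \<Rightarrow> pt \<Rightarrow> 'a::comm_ring_1" where
  "basisB j = (if j = 0 then ev Pa
     else if j = 1 then ev Pb
     else if j = 2 then lvec l1
     else if j = 3 then mprod (lvec l1) (ev Px)
     else if j = 4 then mprod (lvec l1) (ev Py)
     else (\<lambda>r. 1))"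

definition Mab :: "'a::comm_ring_1 \<Rightarrow> 'a \<Rightarrow> nat \<Rightarrow> nat \<Rightarrow> 'a" where
  "Mab \<alpha> \<beta> i j =
     (if i = 0 \<and> j = 0 then \<alpha> else if i = 0 \<and> j = 2 then \<beta>
      else if i = 1 \<and> j = 1 then \<beta> else if i = 1 \<and> j = 2 then \<alpha> else 0)"

definition Smat :: "'a::comm_ring_1 \<Rightarrow> 'a \<Rightarrow> 'a \<Rightarrow> nat \<Rightarrow> nat \<Rightarrow> 'a" where
  "Smat \<alpha> \<beta> lam i j =
     (if i < 3 \<and> j < 3 then (if i = j then 1 else 0)
      else if i < 3 then 0
      else if j < 3 then Mab \<alpha> \<beta> (i - 3) j
      else if i = j then (if i = 5 then 1 else lam) else 0)"

definition has_matrix :: "((pt \<Rightarrow> 'a::comm_ring_1) \<Rightarrow> pt \<Rightarrow> 'a) \<Rightarrow> (nat \<Rightarrow> nat \<Rightarrow> 'a) \<Rightarrow> bool" where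
  "has_matrix f S \<longleftrightarrow> (\<forall>j<6. f (basisB j) = (\<lambda>r. \<Sum>i<6. S i j * basisB i r))"

end

theory Submission
  imports Defs
begin

text \<open>In characteristic 2 a line \<open>\<ell>\<close> kills each of its own points \<open>p\<close>
  (the two nonzero products \<open>q p\<close> are both \<open>\<ell>\<close>), and sends a point \<open>p \<notin> \<ell>\<close>
  to the sum of the two lines through \<open>p\<close>, i.e. to the sum of the four points collinear
  with \<open>p\<close>. Counting neighbours modulo 2 then gives, for every line \<open>\<ell>\<^sub>i\<close>,
  \<open>\<ell>\<^sub>i(\<ell>x) = \<ell>x\<close>, \<open>\<ell>\<^sub>i(\<ell>y) = \<ell>y\<close>, \<open>\<ell>\<^sub>i s = 0\<close>, and
  \<open>\<ell>\<^sub>i a = \<epsilon> \<ell>x\<close>, \<open>\<ell>\<^sub>i b = \<delta> \<ell>y\<close>, \<open>\<ell>\<^sub>i \<ell> = \<delta> \<ell>x + \<epsilon> \<ell>y\<close>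
  with \<open>(\<epsilon>, \<delta>) = (0,0), (1,0), (0,1), (1,1)\<close>. Since \<open>1 + (1 + \<lambda>) = \<lambda>\<close>,
  the map \<open>id + (1 + \<lambda>) ad\<close> then has matrix \<open>S\<^bsub>\<epsilon>(1+\<lambda>),\<delta>(1+\<lambda>),\<lambda>\<^esub>\<close>.\<close>

lemma UNIV_pt: "UNIV = {Pa, Pb, Pc, Px, Py, Pz}"
  using pt.exhaust by auto

lemma pts_UNIV: "pts = UNIV"
  by (simp add: pts_def UNIV_pt)

lemma finite_UNIV_pt [simp]: "finite (UNIV :: pt set)"
  by (simp add: UNIV_pt)

lemma pt_all_iff: "(\<forall>r. P r) \<longleftrightarrow> P Pa \<and> P Pb \<and> P Pc \<and> P Px \<and> P Py \<and> P Pz"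
  by (metis pt.exhaust)

lemma glines_Bex_iff:
  "(\<exists>L\<in>glines. P L) \<longleftrightarrow> P l1 \<or> P l2 \<or> P l3 \<or> P l4"
  by (simp add: glines_def)

lemmas line_defs = l1_def l2_def l3_def l4_def

lemma line_through_two_points_unique:
  assumes "L \<in> glines" "M \<in> glines" "p \<in> L" "q \<in> L" "p \<in> M" "q \<in> M" "p \<noteq> q"
  shows "L = M"
  using assms unfolding glines_def line_defs by auto

lemma line_third_point:
  assumes "L \<in> glines" "p \<in> L" "q \<in> L" "p \<noteq> q"
  obtains t where "L = {p, q, t}" "t \<noteq> p" "t \<noteq> q"
  using assms unfolding glines_def line_defs by auto

lemma wedge_eqI:
  assumes L: "{p, q, t} \<in> glines" and distinct: "p \<noteq> q" "t \<noteq> p" "t \<noteq> q"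
  shows "wedge p q = t"
  unfolding wedge_def
proof (rule the_equality)
  show "\<exists>L\<in>glines. p \<in> L \<and> q \<in> L \<and> t \<in> L \<and> t \<noteq> p \<and> t \<noteq> q"
    using assms by blast
next
  fix r assume "\<exists>M\<in>glines. p \<in> M \<and> q \<in> M \<and> r \<in> M \<and> r \<noteq> p \<and> r \<noteq> q"
  then obtain M where "M \<in> glines" "p \<in> M" "q \<in> M" "r \<in> M" "r \<noteq> p" "r \<noteq> q" by blast
  with assms line_through_two_points_unique[of "{p, q, t}" M p q] show "r = t" by blast
qed

lemma pprod_eq:
  "pprod p q r = (if p \<noteq> q \<and> (\<exists>L\<in>glines. p \<in> L \<and> q \<in> L \<and> r \<in> L) then 1 else 0)"
proof (cases "coll p q")
  case True
  then obtain L where L: "L \<in> glines" "p \<in> L" "q \<in> L" "p \<noteq> q"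
    by (auto simp: coll_def)
  then obtain t where t: "L = {p, q, t}" "t \<noteq> p" "t \<noteq> q"
    by (rule line_third_point)
  have "wedge p q = t"
    using L t by (intro wedge_eqI) simp_all
  moreover have "(\<exists>M\<in>glines. p \<in> M \<and> q \<in> M \<and> r \<in> M) \<longleftrightarrow> r \<in> L"
    using L line_through_two_points_unique by blast
  ultimately show ?thesis
    using True L t by (auto simp: pprod_def ev_def)
qed (auto simp: pprod_def coll_def)

lemma mprod_ev_right: "mprod u (ev q) r = (\<Sum>p\<in>UNIV. u p * pprod p q r)"
proof -
  have "(\<Sum>q'\<in>UNIV. u p * ev q q' * pprod p q' r) = u p * pprod p q r" for p
    by (simp add: ev_def if_distrib[where f = "\<lambda>c. u p * c * _"] cong: if_cong)
  then show ?thesis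
    by (simp add: mprod_def pts_UNIV)
qed

lemma mprod_linear_right: "mprod u v r = (\<Sum>q\<in>UNIV. v q * mprod u (ev q) r)"
proof -
  have "(\<Sum>q\<in>UNIV. v q * mprod u (ev q) r) = (\<Sum>q\<in>UNIV. \<Sum>p\<in>UNIV. u p * v q * pprod p q r)"
    by (simp add: mprod_ev_right sum_distrib_left ac_simps)
  also have "\<dots> = mprod u v r"
    unfolding mprod_def pts_UNIV by (rule sum.swap)
  finally show ?thesis ..
qed

lemma lvec_of_bool: "lvec S p = of_bool (p \<in> S)"
  by (simp add: lvec_def)

lemma ad_ev_sum: "ad L (ev q) r = (\<Sum>p\<in>L. pprod p q r)"
  by (simp add: ad_def mprod_ev_right lvec_of_bool)

lemma ad_ev:
  assumes char2: "(2::'a::comm_ring_1) = 0" and L: "L \<in> glines"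
  shows "ad L (ev q) r = (of_bool (q \<notin> L \<and> coll q r) :: 'a)"
  using L unfolding ad_ev_sum glines_def
  by (cases q; cases r) (auto simp: pprod_eq glines_Bex_iff coll_def line_defs char2)

lemma numeral_char2:
  assumes "(2::'a::comm_ring_1) = 0"
  shows "(numeral (Num.Bit0 n) :: 'a) = 0" "(numeral (Num.Bit1 n) :: 'a) = 1"
proof -
  have "(numeral (Num.Bit0 n) :: 'a) = 2 * numeral n"
    by (simp only: numeral_Bit0[of n] mult_2)
  then show "(numeral (Num.Bit0 n) :: 'a) = 0"
    using assms by simp
  then show "(numeral (Num.Bit1 n) :: 'a) = 1"
    by (simp only: numeral_Bit1 numeral_Bit0[symmetric] add_0)
qed

lemma ad_lvec:
  assumes char2: "(2::'a::comm_ring_1) = 0" and L: "L \<in> glines"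
  shows "ad L (lvec S) r = (\<Sum>q\<in>S. of_bool (q \<notin> L \<and> coll q r) :: 'a)"
  by (simp add: ad_def mprod_linear_right[of _ "lvec S"] lvec_of_bool ad_ev[OF char2 L, unfolded ad_def])

lemma lines_in_glines: "l1 \<in> glines" "l2 \<in> glines" "l3 \<in> glines" "l4 \<in> glines"
  by (simp_all add: glines_def)

lemma basisB_lvec:
  assumes char2: "(2::'a::comm_ring_1) = 0"
  shows "(basisB 0 :: pt \<Rightarrow> 'a) = lvec {Pa}" "(basisB 1 :: pt \<Rightarrow> 'a) = lvec {Pb}"
    "(basisB 2 :: pt \<Rightarrow> 'a) = lvec l1" "(basisB 3 :: pt \<Rightarrow> 'a) = lvec {Pb, Pc, Py, Pz}"
    "(basisB 4 :: pt \<Rightarrow> 'a) = lvec {Pa, Pc, Px, Pz}" "(basisB 5 :: pt \<Rightarrow> 'a) = lvec UNIV"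
proof -
  have "ad l1 (ev p) = (lvec {q. p \<notin> l1 \<and> coll p q} :: pt \<Rightarrow> 'a)" for p
    by (simp add: fun_eq_iff ad_ev[OF char2 lines_in_glines(1)] lvec_of_bool)
  then show "(basisB 3 :: pt \<Rightarrow> 'a) = lvec {Pb, Pc, Py, Pz}"
    and "(basisB 4 :: pt \<Rightarrow> 'a) = lvec {Pa, Pc, Px, Pz}"
    by (simp_all add: basisB_def ad_def[symmetric] coll_def glines_Bex_iff line_defs)
      (auto intro!: arg_cong[where f = lvec])
qed (simp_all add: basisB_def lvec_def ev_def)

lemma ad_glines_basisB_3_4_5:
  assumes char2: "(2::'a::comm_ring_1) = 0" and L: "L \<in> glines"
  shows "ad L (basisB 3) = (basisB 3 :: pt \<Rightarrow> 'a)" "ad L (basisB 4) = (basisB 4 :: pt \<Rightarrow> 'a)"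
    "ad L (basisB 5) = (\<lambda>r. 0 :: 'a)"
  \<comment> \<open>\<open>sum_of_bool_eq\<close> is removed so that the neighbour counts are summed in \<open>'a\<close>,
    where \<open>numeral_char2\<close> reduces them modulo 2.\<close>
  using L unfolding glines_def
  by (elim insertE emptyE;
      simp only: basisB_lvec[OF char2] fun_eq_iff ad_lvec[OF char2] lines_in_glines;
      simp add: pt_all_iff coll_def glines_Bex_iff line_defs lvec_def numeral_char2[OF char2] UNIV_pt
        del: sum_of_bool_eq)+

lemma ad_lines_basisB_0_1_2:
  assumes char2: "(2::'a::comm_ring_1) = 0"
  shows "ad l1 (basisB 0) = (\<lambda>r. 0 :: 'a)" "ad l1 (basisB 1) = (\<lambda>r. 0 :: 'a)"
    "ad l1 (basisB 2) = (\<lambda>r. 0 :: 'a)"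
  and "ad l2 (basisB 0) = (basisB 3 :: pt \<Rightarrow> 'a)" "ad l2 (basisB 1) = (\<lambda>r. 0 :: 'a)"
    "ad l2 (basisB 2) = (basisB 4 :: pt \<Rightarrow> 'a)"
  and "ad l3 (basisB 0) = (\<lambda>r. 0 :: 'a)" "ad l3 (basisB 1) = (basisB 4 :: pt \<Rightarrow> 'a)"
    "ad l3 (basisB 2) = (basisB 3 :: pt \<Rightarrow> 'a)"
  and "ad l4 (basisB 0) = (basisB 3 :: pt \<Rightarrow> 'a)" "ad l4 (basisB 1) = (basisB 4 :: pt \<Rightarrow> 'a)"
    "ad l4 (basisB 2) = (\<lambda>r. basisB 3 r + basisB 4 r :: 'a)"
  by (simp only: basisB_lvec[OF char2] fun_eq_iff ad_lvec[OF char2] lines_in_glines;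
      simp add: pt_all_iff coll_def glines_Bex_iff line_defs lvec_def numeral_char2[OF char2]
        del: sum_of_bool_eq)+

lemma has_matrix_tau:
  fixes e d lam :: "'a::comm_ring_1"
  assumes char2: "(2::'a) = 0" and L: "L \<in> glines"
    and a: "ad L (basisB 0) = (\<lambda>r. e * basisB 3 r)"
    and b: "ad L (basisB 1) = (\<lambda>r. d * basisB 4 r)"
    and l: "ad L (basisB 2) = (\<lambda>r. d * basisB 3 r + e * basisB 4 r)"
  shows "has_matrix (tau L lam) (Smat ((1 + lam) * e) ((1 + lam) * d) lam)"
  unfolding has_matrix_def
proof (intro allI impI ext)
  fix j r assume "j < (6::nat)"
  then have "j \<in> {0, 1, 2, 3, 4, 5}" by auto
  then show "tau L lam (basisB j) r = (\<Sum>i<6. Smat ((1 + lam) * e) ((1 + lam) * d) lam i j * basisB i r)"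
    using a b l ad_glines_basisB_3_4_5[OF char2 L]
    by (auto simp: tau_def lessThan_nat_numeral lessThan_Suc Smat_def Mab_def algebra_simps char2)
qed

theorem lemma6p9:
  fixes lam :: "'a::comm_ring_1"
  assumes char2: "(2::'a) = 0"
    and unit: "lam dvd 1"
  shows "has_matrix (tau l1 lam) (Smat 0 0 lam)
       \<and> has_matrix (tau l2 lam) (Smat (1 + lam) 0 lam)
       \<and> has_matrix (tau l3 lam) (Smat 0 (1 + lam) lam)
       \<and> has_matrix (tau l4 lam) (Smat (1 + lam) (1 + lam) lam)"
proof -
  note products = ad_lines_basisB_0_1_2[OF char2]
  have "has_matrix (tau l1 lam) (Smat ((1 + lam) * 0) ((1 + lam) * 0) lam)"
    by (rule has_matrix_tau) (use products in \<open>simp_all add: char2 lines_in_glines\<close>)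
  moreover have "has_matrix (tau l2 lam) (Smat ((1 + lam) * 1) ((1 + lam) * 0) lam)"
    by (rule has_matrix_tau) (use products in \<open>simp_all add: char2 lines_in_glines\<close>)
  moreover have "has_matrix (tau l3 lam) (Smat ((1 + lam) * 0) ((1 + lam) * 1) lam)"
    by (rule has_matrix_tau) (use products in \<open>simp_all add: char2 lines_in_glines\<close>)
  moreover have "has_matrix (tau l4 lam) (Smat ((1 + lam) * 1) ((1 + lam) * 1) lam)"
    by (rule has_matrix_tau) (use products in \<open>simp_all add: char2 lines_in_glines\<close>)
  ultimately show ?thesis
    by simp
qed

end
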